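(* Let $\mathcal{G}'$ and $\mathcal{G}''$ be two simple directed graphs on the same finite vertex set $\Pi$, each containing exactly one root component. Then there is a finite sequence of simple directed graphs $\mathcal{G}'=\mathcal{G}_0,\mathcal{G}_1,\dots,\mathcal{G}_k=\mathcal{G}''$ on $\Pi$, each containing exactly one root component, such that any two consecutive graphs differ in at most one edge. Moreover, if $\mathcal{G}'$ and $\mathcal{G}''$ have the same root component $\mathcal{R}$, the sequence can be chosen so that every $\mathcal{G}_i$ has root component $\mathcal{R}$.
   Context: A root component of a directed graph $\mathcal{G}$ is a strongly connected component $\mathcal{R}$ of $\mathcal{G}$ such that there is no edge $(q\to p)$ in $\mathcal{G}$ with $p\in\mathcal{R}$ and $q\notin\mathcal{R}$. *)

theory Defs
  imports Main
begin

text \<open>A simple directed graph on the vertex set V: an edge set E \<subseteq> V \<times> V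
  with no self-loops (no multi-edges is automatic for a set of pairs).\<close>
definition simple_digraph :: "'a set \<Rightarrow> ('a \<times> 'a) set \<Rightarrow> bool" where
  "simple_digraph V E \<longleftrightarrow> E \<subseteq> V \<times> V \<and> (\<forall>v. (v, v) \<notin> E)"

definition scc :: "'a set \<Rightarrow> ('a \<times> 'a) set \<Rightarrow> 'a set \<Rightarrow> bool" where
  "scc V E C \<longleftrightarrow> C \<noteq> {} \<and> C \<subseteq> V \<and>
     (\<forall>p\<in>C. \<forall>q\<in>C. (p, q) \<in> E\<^sup>* \<and> (q, p) \<in> E\<^sup>*) \<and>
     (\<forall>D. C \<subseteq> D \<and> D \<subseteq> V \<and> (\<forall>p\<in>D. \<forall>q\<in>D. (p, q) \<in> E\<^sup>* \<and> (q, p) \<in> E\<^sup>*) \<longrightarrow> D = C)"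

definition root_component :: "'a set \<Rightarrow> ('a \<times> 'a) set \<Rightarrow> 'a set \<Rightarrow> bool" where
  "root_component V E R \<longleftrightarrow> scc V E R \<and> (\<forall>q p. (q, p) \<in> E \<and> p \<in> R \<longrightarrow> q \<in> R)"

definition unique_root :: "'a set \<Rightarrow> ('a \<times> 'a) set \<Rightarrow> bool" where
  "unique_root V E \<longleftrightarrow> (\<exists>!R. root_component V E R)"

end

theory Submission
  imports Defs
begin

text \<open>Adding edges to a graph with a unique root keeps the root unique, because with finitely
  many vertices a unique root is the same as a vertex from which every vertex is reachable.
  Likewise, adding edges that do not enter R from outside keeps R a root component.
  Hence both graphs can be grown one edge at a time to a common maximal edge set (all
  non-loop edges, resp. all non-loop edges not entering R), and the path from the first graph
  up to it followed by the reversed path from the second graph is the required sequence.\<close>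

definition edit_path :: "('b set \<Rightarrow> bool) \<Rightarrow> 'b set \<Rightarrow> 'b set \<Rightarrow> bool" where
  "edit_path P A B \<longleftrightarrow> (\<exists>k Gs. Gs 0 = A \<and> Gs k = B \<and> (\<forall>i\<le>k. P (Gs i)) \<and>
     (\<forall>i<k. card (sym_diff (Gs i) (Gs (Suc i))) \<le> 1))"

lemma edit_path_single:
  assumes "P A" "P B" "card (sym_diff A B) \<le> 1"
  shows "edit_path P A B"
  unfolding edit_path_def
  using assms by (intro exI[of _ 1] exI[of _ "\<lambda>i. if i = 0 then A else B"]) auto

lemma edit_path_sym:
  assumes "edit_path P A B"
  shows "edit_path P B A"
proof -
  obtain k Gs where Gs: "Gs 0 = A" "Gs k = B" "\<forall>i\<le>k. P (Gs i)"
    "\<forall>i<k. card (sym_diff (Gs i) (Gs (Suc i))) \<le> 1"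
    using assms unfolding edit_path_def by blast
  have "card (sym_diff (Gs (k - i)) (Gs (k - Suc i))) \<le> 1"
    if "i < k" for i
    using Gs(4)[rule_format, of "k - Suc i"] that by (simp add: Suc_diff_Suc Un_commute)
  then show ?thesis
    unfolding edit_path_def using Gs(1-3)
    by (intro exI[of _ k] exI[of _ "\<lambda>i. Gs (k - i)"]) auto
qed

lemma edit_path_trans:
  assumes "edit_path P A B" "edit_path P B C"
  shows "edit_path P A C"
proof -
  obtain k1 Gs where Gs: "Gs 0 = A" "Gs k1 = B" "\<forall>i\<le>k1. P (Gs i)"
    "\<forall>i<k1. card (sym_diff (Gs i) (Gs (Suc i))) \<le> 1"
    using assms(1) unfolding edit_path_def by blast
  obtain k2 Hs where Hs: "Hs 0 = B" "Hs k2 = C" "\<forall>i\<le>k2. P (Hs i)"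
    "\<forall>i<k2. card (sym_diff (Hs i) (Hs (Suc i))) \<le> 1"
    using assms(2) unfolding edit_path_def by blast
  define Fs where "Fs i = (if i \<le> k1 then Gs i else Hs (i - k1))" for i
  have "P (Fs i)" if "i \<le> k1 + k2" for i
    using Gs(3) Hs(3) that unfolding Fs_def by auto
  moreover have "card (sym_diff (Fs i) (Fs (Suc i))) \<le> 1" if "i < k1 + k2" for i
  proof (cases "i < k1")
    case True
    then show ?thesis using Gs(4) unfolding Fs_def by simp
  next
    case False
    then have "Fs i = Hs (i - k1)" "Fs (Suc i) = Hs (Suc (i - k1))"
      using Gs(2) Hs(1) unfolding Fs_def by (auto simp: Suc_diff_le)
    then show ?thesis using Hs(4) False that by simp
  qed
  ultimately show ?thesis
    unfolding edit_path_def using Gs(1) Hs(2) Gs(2) Hs(1)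
    by (intro exI[of _ "k1 + k2"] exI[of _ Fs]) (auto simp: Fs_def)
qed

lemma edit_path_union:
  assumes "finite D" "\<And>X. A \<subseteq> X \<Longrightarrow> X \<subseteq> A \<union> D \<Longrightarrow> P X"
  shows "edit_path P A (A \<union> D)"
  using assms
proof (induction D rule: finite_induct)
  case empty
  then show ?case using edit_path_single[of P A A] by simp
next
  case (insert x D)
  have "edit_path P A (A \<union> D)" using insert.IH insert.prems by blast
  moreover have "sym_diff (A \<union> D) (A \<union> insert x D) \<subseteq> {x}" by blast
  then have "card (sym_diff (A \<union> D) (A \<union> insert x D)) \<le> 1"
    using card_mono[of "{x}"] by fastforce
  then have "edit_path P (A \<union> D) (A \<union> insert x D)"
    using insert.prems by (intro edit_path_single) blast+
  ultimately show ?case by (rule edit_path_trans)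
qed

lemma edit_path_interval:
  assumes "finite (B - A)" "A \<subseteq> B" "\<And>X. A \<subseteq> X \<Longrightarrow> X \<subseteq> B \<Longrightarrow> P X"
  shows "edit_path P A B"
  using edit_path_union[of "B - A" A P] assms by (simp add: Un_absorb1)

lemma edit_path_via_superset:
  assumes "finite K" "A \<subseteq> K" "B \<subseteq> K"
    and "\<And>X. A \<subseteq> X \<Longrightarrow> X \<subseteq> K \<Longrightarrow> P X" "\<And>X. B \<subseteq> X \<Longrightarrow> X \<subseteq> K \<Longrightarrow> P X"
  shows "edit_path P A B"
proof -
  have "edit_path P A K" "edit_path P B K"
    using edit_path_interval[of K A P] edit_path_interval[of K B P] assms by simp_all
  then show ?thesis by (blast intro: edit_path_trans edit_path_sym)
qed

definition backward_closed :: "('a \<times> 'a) set \<Rightarrow> 'a set \<Rightarrow> bool" where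
  "backward_closed E S \<longleftrightarrow> (\<forall>q p. (q, p) \<in> E \<and> p \<in> S \<longrightarrow> q \<in> S)"

lemma root_component_iff: "root_component V E R \<longleftrightarrow> scc V E R \<and> backward_closed E R"
  unfolding root_component_def backward_closed_def by simp

lemma root_componentD:
  assumes "root_component V E R"
  shows "scc V E R" "backward_closed E R" "R \<noteq> {}" "R \<subseteq> V"
  using assms unfolding root_component_iff scc_def by simp_all

lemma simple_digraph_iff: "simple_digraph V E \<longleftrightarrow> E \<subseteq> V \<times> V - Id"
  unfolding simple_digraph_def by auto

lemma backward_closed_rtrancl:
  assumes "backward_closed E S" "(a, b) \<in> E\<^sup>*" "b \<in> S"
  shows "a \<in> S"
  using assms(2,3) by (induction rule: converse_rtrancl_induct)
    (use assms(1) in \<open>auto simp: backward_closed_def\<close>)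

lemma rtrancl_into_vertices:
  assumes "(q, p) \<in> E\<^sup>*" "p \<in> V" "E \<subseteq> V \<times> V"
  shows "q \<in> V"
  using assms by (induction rule: converse_rtrancl_induct) auto

lemma scc_eq_mutually_reachable:
  assumes "scc V E C" "r \<in> C"
  shows "C = {q \<in> V. (q, r) \<in> E\<^sup>* \<and> (r, q) \<in> E\<^sup>*}"
proof -
  let ?M = "{q \<in> V. (q, r) \<in> E\<^sup>* \<and> (r, q) \<in> E\<^sup>*}"
  have "C \<subseteq> ?M" using assms unfolding scc_def by blast
  moreover have "\<forall>a\<in>?M. \<forall>b\<in>?M. (a, b) \<in> E\<^sup>* \<and> (b, a) \<in> E\<^sup>*" by (auto intro: rtrancl_trans)
  ultimately show ?thesis using assms unfolding scc_def by blast
qed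

text \<open>The ancestors of a vertex of S with fewest ancestors form a root component.\<close>
lemma root_component_in_backward_closed:
  assumes fin: "finite V" and EV: "E \<subseteq> V \<times> V" and SV: "S \<subseteq> V" and "S \<noteq> {}"
    and closed: "backward_closed E S"
  shows "\<exists>C. root_component V E C \<and> C \<subseteq> S"
proof -
  define anc where "anc p = {q. (q, p) \<in> E\<^sup>*}" for p
  have anc_vertices: "anc p \<subseteq> V" if "p \<in> V" for p
    using rtrancl_into_vertices[OF _ that EV] unfolding anc_def by blast
  obtain p where p: "p \<in> S" and p_min: "\<And>y. y \<in> S \<Longrightarrow> card (anc p) \<le> card (anc y)"
    using ex_has_least_nat[of "\<lambda>x. x \<in> S" _ "\<lambda>x. card (anc x)"] \<open>S \<noteq> {}\<close> by blast
  have p_in: "p \<in> anc p" unfolding anc_def by simp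
  have anc_S: "anc p \<subseteq> S" unfolding anc_def using backward_closed_rtrancl[OF closed] p by blast
  have reach_back: "(p, q) \<in> E\<^sup>*" if "q \<in> anc p" for q
  proof -
    have "finite (anc p)" using anc_vertices p SV fin finite_subset by blast
    moreover have "anc q \<subseteq> anc p" using that unfolding anc_def by (auto intro: rtrancl_trans)
    moreover have "card (anc p) \<le> card (anc q)" using p_min that anc_S by blast
    ultimately have "anc q = anc p" by (rule card_seteq)
    then show ?thesis using p_in unfolding anc_def by blast
  qed
  have strong: "\<forall>a\<in>anc p. \<forall>b\<in>anc p. (a, b) \<in> E\<^sup>* \<and> (b, a) \<in> E\<^sup>*"
    using reach_back unfolding anc_def by (blast intro: rtrancl_trans)
  have "scc V E (anc p)"
    unfolding scc_def
  proof (intro conjI allI impI)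
    fix D assume D: "anc p \<subseteq> D \<and> D \<subseteq> V \<and> (\<forall>a\<in>D. \<forall>b\<in>D. (a, b) \<in> E\<^sup>* \<and> (b, a) \<in> E\<^sup>*)"
    then have "D \<subseteq> anc p" using p_in unfolding anc_def by blast
    then show "D = anc p" using D by blast
  qed (use p_in anc_vertices p SV strong in auto)
  moreover have "backward_closed E (anc p)"
    unfolding anc_def backward_closed_def by (auto intro: converse_rtrancl_into_rtrancl)
  ultimately show ?thesis using anc_S unfolding root_component_iff by blast
qed

lemma unique_root_iff_reaches_all:
  assumes fin: "finite V" and EV: "E \<subseteq> V \<times> V"
  shows "unique_root V E \<longleftrightarrow> (\<exists>r\<in>V. \<forall>v\<in>V. (r, v) \<in> E\<^sup>*)"
proof
  assume unique: "unique_root V E"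
  then obtain R where R: "root_component V E R" unfolding unique_root_def by blast
  obtain r where r: "r \<in> R" "r \<in> V" using root_componentD(3,4)[OF R] by blast
  have "(r, v) \<in> E\<^sup>*" if v: "v \<in> V" for v
  proof -
    let ?A = "{q. (q, v) \<in> E\<^sup>*}"
    have "?A \<subseteq> V" using rtrancl_into_vertices[OF _ v EV] by blast
    moreover have "?A \<noteq> {}" by blast
    moreover have "backward_closed E ?A"
      unfolding backward_closed_def by (auto intro: converse_rtrancl_into_rtrancl)
    ultimately obtain C where C: "root_component V E C" "C \<subseteq> ?A"
      using root_component_in_backward_closed[OF fin EV] by blast
    have "C = R" using unique C(1) R unfolding unique_root_def by blast
    then show ?thesis using C(2) r by blast
  qed
  then show "\<exists>r\<in>V. \<forall>v\<in>V. (r, v) \<in> E\<^sup>*" using r by blast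
next
  assume "\<exists>r\<in>V. \<forall>v\<in>V. (r, v) \<in> E\<^sup>*"
  then obtain r where r: "r \<in> V" and reach: "\<forall>v\<in>V. (r, v) \<in> E\<^sup>*" by blast
  have "V \<noteq> {}" "backward_closed E V" using r EV unfolding backward_closed_def by auto
  then obtain C where C: "root_component V E C"
    using root_component_in_backward_closed[OF fin EV subset_refl] by blast
  have root_in: "r \<in> R'" if R': "root_component V E R'" for R'
  proof -
    obtain p where p: "p \<in> R'" "p \<in> V" using root_componentD(3,4)[OF R'] by blast
    have "backward_closed E R'" using root_componentD(2)[OF R'] .
    moreover have "(r, p) \<in> E\<^sup>*" using reach p(2) by blast
    ultimately show ?thesis using p(1) by (rule backward_closed_rtrancl)
  qed
  have "R' = C" if R': "root_component V E R'" for R'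
  proof -
    have "scc V E R'" "scc V E C" using root_componentD(1)[OF R'] root_componentD(1)[OF C] by simp_all
    then show ?thesis
      using scc_eq_mutually_reachable[of V E R' r] scc_eq_mutually_reachable[of V E C r]
        root_in[OF R'] root_in[OF C] by simp
  qed
  then show "unique_root V E" unfolding unique_root_def using C by blast
qed

lemma unique_root_mono:
  assumes "finite V" "E \<subseteq> F" "F \<subseteq> V \<times> V" "unique_root V E"
  shows "unique_root V F"
  using assms unique_root_iff_reaches_all[of V E] unique_root_iff_reaches_all[of V F]
    rtrancl_mono[OF assms(2)] by blast

lemma root_component_mono:
  assumes R: "root_component V E R" and "E \<subseteq> F"
    and closed: "backward_closed F R"
  shows "root_component V F R"
proof -
  have "scc V E R" using root_componentD(1)[OF R] .
  then have "\<forall>p\<in>R. \<forall>q\<in>R. (p, q) \<in> E\<^sup>* \<and> (q, p) \<in> E\<^sup>*" unfolding scc_def by (elim conjE)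
  then have strong: "\<forall>p\<in>R. \<forall>q\<in>R. (p, q) \<in> F\<^sup>* \<and> (q, p) \<in> F\<^sup>*"
    using rtrancl_mono[OF \<open>E \<subseteq> F\<close>] by blast
  obtain r where r: "r \<in> R" using root_componentD(3,4)[OF R] by blast
  have maximal: "D = R"
    if D: "R \<subseteq> D" "\<forall>p\<in>D. \<forall>q\<in>D. (p, q) \<in> F\<^sup>* \<and> (q, p) \<in> F\<^sup>*" for D
  proof -
    have "d \<in> R" if "d \<in> D" for d
    proof -
      have "(d, r) \<in> F\<^sup>*" using D r that by blast
      then show ?thesis using r by (rule backward_closed_rtrancl[OF closed])
    qed
    then show "D = R" using D by blast
  qed
  have "scc V F R"
    unfolding scc_def using root_componentD(3,4)[OF R] strong maximal by blast
  then show ?thesis using closed unfolding root_component_iff by blast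
qed

theorem lemma16:
  fixes \<Pi> :: "'a set" and G1 G2 :: "('a \<times> 'a) set"
  assumes "finite \<Pi>"
    and "simple_digraph \<Pi> G1" and "unique_root \<Pi> G1"
    and "simple_digraph \<Pi> G2" and "unique_root \<Pi> G2"
  shows "(\<exists>k Gs. Gs 0 = G1 \<and> Gs k = G2 \<and>
            (\<forall>i\<le>k. simple_digraph \<Pi> (Gs i) \<and> unique_root \<Pi> (Gs i)) \<and>
            (\<forall>i<k. card ((Gs i - Gs (Suc i)) \<union> (Gs (Suc i) - Gs i)) \<le> 1))
      \<and> (\<forall>R. root_component \<Pi> G1 R \<and> root_component \<Pi> G2 R \<longrightarrow>
          (\<exists>k Gs. Gs 0 = G1 \<and> Gs k = G2 \<and>
            (\<forall>i\<le>k. simple_digraph \<Pi> (Gs i) \<and> unique_root \<Pi> (Gs i) \<and> root_component \<Pi> (Gs i) R) \<and>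
            (\<forall>i<k. card ((Gs i - Gs (Suc i)) \<union> (Gs (Suc i) - Gs i)) \<le> 1)))"
proof -
  let ?K = "\<Pi> \<times> \<Pi> - Id"
  have fin_K: "finite ?K" using assms(1) by simp
  have G_K: "G1 \<subseteq> ?K" "G2 \<subseteq> ?K" using assms(2,4) by (simp_all add: simple_digraph_iff)
  have grow: "simple_digraph \<Pi> X \<and> unique_root \<Pi> X"
    if "G \<subseteq> X" "X \<subseteq> ?K" "unique_root \<Pi> G" for G X
    using that unique_root_mono[OF assms(1) that(1)] by (auto simp: simple_digraph_iff)
  have "edit_path (\<lambda>X. simple_digraph \<Pi> X \<and> unique_root \<Pi> X) G1 G2"
    by (rule edit_path_via_superset[OF fin_K G_K]) (use grow assms(3,5) in blast)+
  moreover have "edit_path (\<lambda>X. simple_digraph \<Pi> X \<and> unique_root \<Pi> X \<and> root_component \<Pi> X R) G1 G2"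
    if R: "root_component \<Pi> G1 R" "root_component \<Pi> G2 R" for R
  proof -
    let ?KR = "{(u, v) \<in> ?K. v \<in> R \<longrightarrow> u \<in> R}"
    have "backward_closed G1 R" "backward_closed G2 R"
      using root_componentD(2)[OF R(1)] root_componentD(2)[OF R(2)] by simp_all
    then have "G1 \<subseteq> ?KR" "G2 \<subseteq> ?KR" using G_K unfolding backward_closed_def by fast+
    moreover have "finite ?KR" using fin_K by (rule finite_subset[rotated]) auto
    moreover have "simple_digraph \<Pi> X \<and> unique_root \<Pi> X \<and> root_component \<Pi> X R"
      if "G \<subseteq> X" "X \<subseteq> ?KR" "unique_root \<Pi> G" "root_component \<Pi> G R" for G X
    proof -
      have "backward_closed X R" using that(2) unfolding backward_closed_def by blast
      then show ?thesis using grow[of G X] root_component_mono[OF that(4,1)] that by blast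
    qed
    ultimately show ?thesis
      by (intro edit_path_via_superset[of ?KR G1 G2]) (use assms(3,5) R in blast)+
  qed
  ultimately show ?thesis unfolding edit_path_def by blast
qed

end
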